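(* Let $X,Y$ be real-valued random variables on an atomless probability space $(\Omega,\mathcal F,\mathbb P)$ (no integrability assumed). The following are equivalent: (i) $X\le_{\rm cx} Y$; (ii) for all $p\in(0,1)$, $$\int_0^p F_X^{-1}(t)\,\mathrm dt \ge \int_0^p F_Y^{-1}(t)\,\mathrm dt \quad\text{and}\quad \int_p^1 F_X^{-1}(t)\,\mathrm dt \le \int_p^1 F_Y^{-1}(t)\,\mathrm dt;$$ (iii) for all $w\in\mathbb R$, $$\mathbb E[(X-w)_-]\le \mathbb E[(Y-w)_-]\quad\text{and}\quad \mathbb E[(X-w)_+]\le \mathbb E[(Y-w)_+].$$
   Context: For $x\in\mathbb R$, $x_+=\max\{x,0\}$ and $x_-=\max\{-x,0\}$. An expectation $\mathbb E[Z]$ is called well-defined if $\mathbb E[Z_+]<\infty$ or $\mathbb E[Z_-]<\infty$ (it may then equal $\pm\infty$). $\mathcal U_{\rm cx}$ denotes the set of all convex functions $\mathbb R\to\mathbb R$. We write $X\le_{\rm cx}Y$ if $\mathbb E[u(X)]\le\mathbb E[u(Y)]$ for all $u\in\mathcal U_{\rm cx}$ such that both expectations are well-defined. $F_X^{-1}(t)=\inf\{x\in\mathbb R:\mathbb P(X\le x)\ge t\}$, $t\in(0,1)$, is the left quantile function. The integrals and expectations in (ii) and (iii) are always well-defined, possibly infinite, with values in $[-\infty,\infty]$. *)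

theory Defs
  imports "HOL-Probability.Probability"
begin

definition atomless :: "'a measure \<Rightarrow> bool" where
  "atomless M \<longleftrightarrow> (\<forall>A\<in>sets M. emeasure M A > 0 \<longrightarrow>
      (\<exists>B\<in>sets M. B \<subseteq> A \<and> 0 < emeasure M B \<and> emeasure M B < emeasure M A))"

definition pos_part :: "real \<Rightarrow> real" where "pos_part x = max x 0"
definition neg_part :: "real \<Rightarrow> real" where "neg_part x = max (- x) 0"

definition ext_expectation :: "'a measure \<Rightarrow> ('a \<Rightarrow> real) \<Rightarrow> ereal" where
  "ext_expectation M Z =
     enn2ereal (\<integral>\<^sup>+ \<omega>. ennreal (pos_part (Z \<omega>)) \<partial>M)
   - enn2ereal (\<integral>\<^sup>+ \<omega>. ennreal (neg_part (Z \<omega>)) \<partial>M)"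

definition expectation_well_defined :: "'a measure \<Rightarrow> ('a \<Rightarrow> real) \<Rightarrow> bool" where
  "expectation_well_defined M Z \<longleftrightarrow>
     (\<integral>\<^sup>+ \<omega>. ennreal (pos_part (Z \<omega>)) \<partial>M) < \<infinity> \<or>
     (\<integral>\<^sup>+ \<omega>. ennreal (neg_part (Z \<omega>)) \<partial>M) < \<infinity>"

definition cx_le :: "'a measure \<Rightarrow> ('a \<Rightarrow> real) \<Rightarrow> ('a \<Rightarrow> real) \<Rightarrow> bool" where
  "cx_le M X Y \<longleftrightarrow> (\<forall>u :: real \<Rightarrow> real. convex_on UNIV u \<longrightarrow>
      expectation_well_defined M (\<lambda>\<omega>. u (X \<omega>)) \<longrightarrow>
      expectation_well_defined M (\<lambda>\<omega>. u (Y \<omega>)) \<longrightarrow>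
      ext_expectation M (\<lambda>\<omega>. u (X \<omega>)) \<le> ext_expectation M (\<lambda>\<omega>. u (Y \<omega>)))"

definition left_quantile :: "'a measure \<Rightarrow> ('a \<Rightarrow> real) \<Rightarrow> real \<Rightarrow> real" where
  "left_quantile M X t = Inf {x. measure M {\<omega> \<in> space M. X \<omega> \<le> x} \<ge> t}"

definition ext_set_integral :: "real set \<Rightarrow> (real \<Rightarrow> real) \<Rightarrow> ereal" where
  "ext_set_integral S f =
     enn2ereal (\<integral>\<^sup>+ t. ennreal (pos_part (f t)) * indicator S t \<partial>lborel)
   - enn2ereal (\<integral>\<^sup>+ t. ennreal (neg_part (f t)) * indicator S t \<partial>lborel)"

end

theory Submission
  imports Defs
begin

(* All three conditions are compared with the stop-loss conditions (iii).
   (i) implies (iii) because hinge functions are convex and nonnegative.  Conversely, a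
   nondecreasing convex function bounded below is a pointwise limit from below of nonnegative
   combinations of a constant and hinges (x - w)+, so Fatou's lemma turns the stop-loss
   inequalities into E f(X) <= E f(Y); the reflection x -> -x handles nonincreasing f, and every
   nonnegative convex function is the sum of one of each kind.  A general convex u is replaced by
   (u + n)+, and the negative parts are recovered by monotone convergence as n -> oo.
   For (ii), the quantile transform gives E g(X) = int_0^1 g(F_X^-1(t)) dt.  For nondecreasing
   q, r on (0,1) the upper tail integrals int_p^1 and the stop-loss integrals
   int_0^1 (q - w)+ control each other: take w = r(p) in one direction, and in the other
   integrate over (p, 1) for p decreasing to inf {t. w <= q t}.  Lower tails reduce to upper
   tails under t -> 1 - t, q -> -q(1 - .). *)

lemma pos_part_nonneg [simp]: "0 \<le> pos_part x"
  by (simp add: pos_part_def)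

lemma neg_part_nonneg [simp]: "0 \<le> neg_part x"
  by (simp add: neg_part_def)

lemma pos_part_measurable [measurable (raw)]:
  "f \<in> borel_measurable M \<Longrightarrow> (\<lambda>x. pos_part (f x)) \<in> borel_measurable M"
  unfolding pos_part_def by measurable

lemma neg_part_measurable [measurable (raw)]:
  "f \<in> borel_measurable M \<Longrightarrow> (\<lambda>x. neg_part (f x)) \<in> borel_measurable M"
  unfolding neg_part_def by measurable

section \<open>Convex functions of a real variable\<close>

lemma convex_on_chord_slopes:
  fixes f :: "real \<Rightarrow> real"
  assumes f: "convex_on UNIV f" and "u \<le> v" "v \<le> y"
  shows "(f v - f u) * (y - v) \<le> (f y - f v) * (v - u)"
proof (cases "u < y")
  case True
  have "f v \<le> (f y - f u) / (y - u) * (v - u) + f u"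
    using convex_onD_Icc'[OF convex_on_subset[OF f]] assms by auto
  then have "f v * (y - u) \<le> (f y - f u) * (v - u) + f u * (y - u)"
    using True by (simp add: field_simps)
  then show ?thesis
    by (simp add: algebra_simps)
next
  case False
  then have "u = v" "v = y"
    using assms by auto
  then show ?thesis
    by simp
qed

lemma convex_on_reflect:
  fixes f :: "real \<Rightarrow> real"
  assumes "convex_on UNIV f"
  shows "convex_on UNIV (\<lambda>x. f (- x))"
proof (rule convex_onI)
  fix t x y :: real
  assume "0 < t" "t < 1"
  then show "f (- ((1 - t) *\<^sub>R x + t *\<^sub>R y)) \<le> (1 - t) * f (- x) + t * f (- y)"
    using convex_onD[OF assms, of t "- x" "- y"] by (simp add: algebra_simps)
qed simp

lemma convex_on_max:
  fixes f g :: "real \<Rightarrow> real"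
  assumes f: "convex_on UNIV f" and g: "convex_on UNIV g"
  shows "convex_on UNIV (\<lambda>x. max (f x) (g x))"
proof (rule convex_onI)
  fix t x y :: real
  assume t: "0 < t" "t < 1"
  have "(1 - t) * f x + t * f y \<le> (1 - t) * max (f x) (g x) + t * max (f y) (g y)"
    using t by (intro add_mono mult_left_mono) auto
  then have "f ((1 - t) *\<^sub>R x + t *\<^sub>R y) \<le> (1 - t) * max (f x) (g x) + t * max (f y) (g y)"
    using convex_onD[OF f, of t x y] t by fastforce
  moreover have "(1 - t) * g x + t * g y \<le> (1 - t) * max (f x) (g x) + t * max (f y) (g y)"
    using t by (intro add_mono mult_left_mono) auto
  then have "g ((1 - t) *\<^sub>R x + t *\<^sub>R y) \<le> (1 - t) * max (f x) (g x) + t * max (f y) (g y)"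
    using convex_onD[OF g, of t x y] t by fastforce
  ultimately show "max (f ((1 - t) *\<^sub>R x + t *\<^sub>R y)) (g ((1 - t) *\<^sub>R x + t *\<^sub>R y))
      \<le> (1 - t) * max (f x) (g x) + t * max (f y) (g y)"
    by simp
qed simp

lemma convex_on_pos_part:
  fixes f :: "real \<Rightarrow> real"
  assumes "convex_on UNIV f"
  shows "convex_on UNIV (\<lambda>x. pos_part (f x))"
  unfolding pos_part_def by (rule convex_on_max[OF assms]) (simp add: convex_on_const)

lemma convex_on_mono_after_increase:
  fixes f :: "real \<Rightarrow> real"
  assumes "convex_on UNIV f" "c < d" "f c \<le> f d" "d \<le> x"
  shows "f d \<le> f x"
proof -
  have "0 \<le> (f d - f c) * (x - d)"
    using assms by simp
  also have "\<dots> \<le> (f x - f d) * (d - c)"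
    using convex_on_chord_slopes assms by simp
  finally show ?thesis
    using \<open>c < d\<close> by (simp add: zero_le_mult_iff)
qed

lemma convex_on_antimono_before_decrease:
  fixes f :: "real \<Rightarrow> real"
  assumes "convex_on UNIV f" "c < d" "f d \<le> f c" "x \<le> c"
  shows "f c \<le> f x"
  using convex_on_mono_after_increase[OF convex_on_reflect[OF assms(1)], of "- d" "- c" "- x"] assms
  by simp

lemma convex_on_mono_or_antimono_or_min:
  fixes f :: "real \<Rightarrow> real"
  assumes f: "convex_on UNIV f"
  shows "mono f \<or> antimono f \<or> (\<exists>m. \<forall>x. f m \<le> f x)"
proof (rule ccontr)
  assume "\<not> ?thesis"
  then have "\<not> mono f" "\<not> antimono f"
    by auto
  then obtain a b c d where "a \<le> b" "f b < f a" and "c \<le> d" "f c < f d"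
    unfolding mono_def antimono_def by (meson not_le)
  then have ab: "a < b" "f b < f a" and cd: "c < d" "f c < f d"
    by (metis order.not_eq_order_implies_strict order.irrefl)+
  define I where "I = {min a c .. max b d}"
  have a_d: "a \<in> I" "d \<in> I"
    using ab cd by (simp_all add: I_def min_le_iff_disj le_max_iff_disj)
  have "continuous_on I f"
    using convex_on_continuous[OF open_UNIV f] continuous_on_subset by blast
  moreover have "compact I"
    by (simp add: I_def)
  ultimately obtain m where m: "\<And>y. y \<in> I \<Longrightarrow> f m \<le> f y"
    using continuous_attains_inf[of I f] a_d by blast
  have "f m \<le> f x" for x
  proof -
    consider "x \<in> I" | "x < min a c" | "max b d < x"
      unfolding I_def by fastforce
    then show ?thesis
    proof cases
      case 2
      then have "f a \<le> f x"
        using convex_on_antimono_before_decrease[OF f ab(1)] ab by simp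
      moreover have "f m \<le> f a"
        using m a_d by simp
      ultimately show ?thesis by simp
    next
      case 3
      then have "f d \<le> f x"
        using convex_on_mono_after_increase[OF f cd(1)] cd by simp
      moreover have "f m \<le> f d"
        using m a_d by simp
      ultimately show ?thesis by simp
    qed (use m in auto)
  qed
  with \<open>\<not> ?thesis\<close> show False by blast
qed

lemma convex_on_clamp_at_min:
  fixes f :: "real \<Rightarrow> real"
  assumes f: "convex_on UNIV f" and m: "\<And>x. f m \<le> f x"
  shows "convex_on UNIV (\<lambda>x. f (max x m))" and "mono (\<lambda>x. f (max x m))"
proof -
  have mono_right: "f y \<le> f z" if "m \<le> y" "y \<le> z" for y z
    using convex_on_mono_after_increase[OF f, of m y z] m that by (cases "m = y") auto
  show "mono (\<lambda>x. f (max x m))"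
    by (intro monoI mono_right) auto
  show "convex_on UNIV (\<lambda>x. f (max x m))"
  proof (rule convex_onI)
    fix t x y :: real
    assume t: "0 < t" "t < 1"
    have "(1 - t) * x + t * y \<le> (1 - t) * max x m + t * max y m"
      and "(1 - t) * m + t * m \<le> (1 - t) * max x m + t * max y m"
      using t by (intro add_mono mult_left_mono; simp)+
    then have "max ((1 - t) * x + t * y) m \<le> (1 - t) * max x m + t * max y m"
      by (intro max.boundedI) (simp_all add: algebra_simps)
    then have "f (max ((1 - t) * x + t * y) m) \<le> f ((1 - t) * max x m + t * max y m)"
      by (rule mono_right[rotated]) simp
    also have "\<dots> \<le> (1 - t) * f (max x m) + t * f (max y m)"
      using convex_onD[OF f, of t "max x m" "max y m"] t by simp
    finally show "f (max ((1 - t) *\<^sub>R x + t *\<^sub>R y) m) \<le> (1 - t) * f (max x m) + t * f (max y m)"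
      by simp
  qed simp
qed

lemma convex_nonneg_split_antimono_mono:
  fixes f :: "real \<Rightarrow> real"
  assumes f: "convex_on UNIV f" and nonneg: "\<And>x. 0 \<le> f x"
  obtains g h where "convex_on UNIV g" "antimono g" "\<And>x. 0 \<le> g x"
    and "convex_on UNIV h" "mono h" "\<And>x. 0 \<le> h x" and "\<And>x. f x = g x + h x"
proof -
  consider "mono f" | "antimono f" | m where "\<And>x. f m \<le> f x"
    using convex_on_mono_or_antimono_or_min[OF f] by blast
  then show ?thesis
  proof cases
    case 1
    then show ?thesis
      using that[of "\<lambda>_. 0" f] f nonneg by (simp add: convex_on_const antimono_def)
  next
    case 2
    then show ?thesis
      using that[of f "\<lambda>_. 0"] f nonneg by (simp add: convex_on_const mono_def)
  next
    case 3
    define f' where "f' x = f (- x)" for x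
    have f': "convex_on UNIV f'" "\<And>x. f' (- m) \<le> f' x"
      unfolding f'_def using convex_on_reflect[OF f] 3 by auto
    have clamp: "f' (max (- x) (- m)) = f (min x m)" for x
      unfolding f'_def by (simp add: max_def min_def)
    have "convex_on UNIV (\<lambda>x. f (min x m))"
      using convex_on_reflect[OF convex_on_clamp_at_min(1)[OF f']] by (simp only: clamp)
    then have "convex_on UNIV (\<lambda>x. f (min x m) - f m)"
      by (rule convex_on_diff) (simp add: concave_on_const)
    moreover have "antimono (\<lambda>x. f (min x m) - f m)"
    proof (rule antimonoI)
      fix x y :: real
      assume "x \<le> y"
      then have "f' (max (- y) (- m)) \<le> f' (max (- x) (- m))"
        by (intro monoD[OF convex_on_clamp_at_min(2)[OF f']]) simp
      then show "f (min y m) - f m \<le> f (min x m) - f m"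
        by (simp add: clamp)
    qed
    moreover have "0 \<le> f (min x m) - f m" "f x = (f (min x m) - f m) + f (max x m)" for x
      using 3 by (cases "x \<le> m"; simp add: max.absorb1 max.absorb2 min.absorb1 min.absorb2)+
    ultimately show ?thesis
      using that convex_on_clamp_at_min[OF f 3] nonneg by blast
  qed
qed

section \<open>Approximation by hinge functions\<close>

lemma sum_slope_jumps_by_parts:
  fixes s H :: "nat \<Rightarrow> real"
  shows "(\<Sum>k<Suc N. (s k - (if k = 0 then 0 else s (k - 1))) * H (Suc k)) =
         (\<Sum>k<N. s k * (H (Suc k) - H (Suc (Suc k)))) + s N * H (Suc N)"
  by (induction N) (simp_all add: algebra_simps)

definition node :: "real \<Rightarrow> real \<Rightarrow> nat \<Rightarrow> real" where
  "node a h k = a + real k * h"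

definition chord_slope :: "(real \<Rightarrow> real) \<Rightarrow> real \<Rightarrow> real \<Rightarrow> nat \<Rightarrow> real" where
  "chord_slope f a h k = (f (node a h (Suc k)) - f (node a h k)) / h"

definition slope_jump :: "(real \<Rightarrow> real) \<Rightarrow> real \<Rightarrow> real \<Rightarrow> nat \<Rightarrow> real" where
  "slope_jump f a h k = chord_slope f a h k - (if k = 0 then 0 else chord_slope f a h (k - 1))"

text \<open>The hinge interpolant equals \<open>c\<close> up to node 1 and on \<open>[node (k + 1), node (k + 2)]\<close> has
  the slope of \<open>f\<close> on \<open>[node k, node (k + 1)]\<close>; this delay by one cell keeps it below \<open>f\<close>.\<close>

definition hinge_interpolant :: "(real \<Rightarrow> real) \<Rightarrow> real \<Rightarrow> real \<Rightarrow> real \<Rightarrow> nat \<Rightarrow> real \<Rightarrow> real" where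
  "hinge_interpolant f c a h N x =
     c + (\<Sum>k<Suc N. slope_jump f a h k * pos_part (x - node a h (Suc k)))"

lemma node_Suc: "node a h (Suc k) = node a h k + h"
  by (simp add: node_def algebra_simps)

lemma hinge_interpolant_by_parts:
  "hinge_interpolant f c a h N x =
     c + (\<Sum>k<N. chord_slope f a h k *
            (pos_part (x - node a h (Suc k)) - pos_part (x - node a h (Suc (Suc k)))))
       + chord_slope f a h N * pos_part (x - node a h (Suc N))"
  unfolding hinge_interpolant_def slope_jump_def
  using sum_slope_jumps_by_parts[of "chord_slope f a h" "\<lambda>i. pos_part (x - node a h i)" N]
  by simp

context
  fixes f :: "real \<Rightarrow> real" and a h :: real
  assumes convex: "convex_on UNIV f" and mono: "mono f" and h: "0 < h"
begin

lemma chord_slope_nonneg: "0 \<le> chord_slope f a h k"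
  using h by (simp add: chord_slope_def node_Suc monoD[OF mono])

lemma chord_slope_le_secant_after:
  assumes "node a h (Suc k) \<le> z"
  shows "chord_slope f a h k * (z - node a h (Suc k)) \<le> f z - f (node a h (Suc k))"
  using convex_on_chord_slopes[OF convex, of "node a h k" "node a h (Suc k)" z] assms h
  by (simp add: chord_slope_def node_Suc field_simps)

lemma secant_before_le_chord_slope:
  assumes "node a h k \<le> z" "z \<le> node a h (Suc k)"
  shows "f z - f (node a h k) \<le> chord_slope f a h k * (z - node a h k)"
proof -
  let ?u = "node a h k" and ?v = "node a h (Suc k)"
  have "(f z - f ?u) * (?v - z) \<le> (f ?v - f z) * (z - ?u)"
    using convex_on_chord_slopes[OF convex] assms by simp
  then have "(f z - f ?u) * h \<le> (f ?v - f ?u) * (z - ?u)"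
    by (simp add: node_Suc algebra_simps)
  then show ?thesis
    using h by (simp add: chord_slope_def field_simps)
qed

lemma chord_slope_mono: "chord_slope f a h k \<le> chord_slope f a h (Suc k)"
proof -
  have "f (node a h (Suc k)) - f (node a h k) \<le> f (node a h (Suc (Suc k))) - f (node a h (Suc k))"
    using chord_slope_le_secant_after[of k "node a h (Suc (Suc k))"] h
    by (simp add: chord_slope_def node_Suc)
  then show ?thesis
    unfolding chord_slope_def using h by (simp add: divide_right_mono)
qed

lemma slope_jump_nonneg: "0 \<le> slope_jump f a h k"
  using chord_slope_nonneg[of 0] chord_slope_mono[of "k - 1"]
  by (cases k) (auto simp: slope_jump_def)

lemma hinge_interpolant_le:
  assumes c: "\<And>z. c \<le> f z"
  shows "hinge_interpolant f c a h N x \<le> f x"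
proof -
  let ?n = "node a h"
  have ramp: "chord_slope f a h k * (pos_part (x - ?n (Suc k)) - pos_part (x - ?n (Suc (Suc k))))
      \<le> f (min x (?n (Suc (Suc k)))) - f (min x (?n (Suc k)))" for k
  proof (cases "x \<le> ?n (Suc k)")
    case False
    then have "pos_part (x - ?n (Suc k)) - pos_part (x - ?n (Suc (Suc k)))
        = min x (?n (Suc (Suc k))) - ?n (Suc k)"
      by (auto simp: pos_part_def node_Suc)
    then show ?thesis
      using False chord_slope_le_secant_after[of k "min x (?n (Suc (Suc k)))"] h
      by (simp add: node_Suc min_def)
  qed (use h in \<open>simp add: pos_part_def node_Suc\<close>)
  have "(\<Sum>k<N. chord_slope f a h k * (pos_part (x - ?n (Suc k)) - pos_part (x - ?n (Suc (Suc k)))))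
      \<le> (\<Sum>k<N. f (min x (?n (Suc (Suc k)))) - f (min x (?n (Suc k))))"
    by (intro sum_mono ramp)
  also have "\<dots> = f (min x (?n (Suc N))) - f (min x (?n 1))"
    using sum_lessThan_telescope[of "\<lambda>i. f (min x (?n (Suc i)))" N] by simp
  finally have "hinge_interpolant f c a h N x
      \<le> c + f (min x (?n (Suc N))) - f (min x (?n 1)) + chord_slope f a h N * pos_part (x - ?n (Suc N))"
    unfolding hinge_interpolant_by_parts by simp
  moreover have "chord_slope f a h N * pos_part (x - ?n (Suc N)) \<le> f (max x (?n (Suc N))) - f (?n (Suc N))"
    using chord_slope_le_secant_after[of N "max x (?n (Suc N))"]
    by (cases "x \<le> ?n (Suc N)") (simp_all add: pos_part_def)
  moreover have "f (min x (?n (Suc N))) + f (max x (?n (Suc N))) = f x + f (?n (Suc N))"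
    by (cases "x \<le> ?n (Suc N)") (simp_all add: min_def max_def)
  ultimately show ?thesis
    using c[of "min x (?n 1)"] by linarith
qed

lemma hinge_interpolant_ge:
  "c + f (min (x - h) (node a h N)) - f (min (x - h) a) \<le> hinge_interpolant f c a h N x"
proof -
  let ?n = "node a h"
  have ramp: "f (min (x - h) (?n (Suc k))) - f (min (x - h) (?n k))
      \<le> chord_slope f a h k * (pos_part (x - ?n (Suc k)) - pos_part (x - ?n (Suc (Suc k))))" for k
  proof (cases "x - h \<le> ?n k")
    case False
    then have "pos_part (x - ?n (Suc k)) - pos_part (x - ?n (Suc (Suc k)))
        = min (x - h) (?n (Suc k)) - ?n k"
      by (auto simp: pos_part_def node_Suc)
    then show ?thesis
      using False secant_before_le_chord_slope[of k "min (x - h) (?n (Suc k))"] h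
      by (simp add: node_Suc min_def)
  qed (use h in \<open>simp add: pos_part_def node_Suc\<close>)
  have "f (min (x - h) (?n N)) - f (min (x - h) a)
      = (\<Sum>k<N. f (min (x - h) (?n (Suc k))) - f (min (x - h) (?n k)))"
    using sum_lessThan_telescope[of "\<lambda>i. f (min (x - h) (?n i))" N] by (simp add: node_def)
  also have "\<dots> \<le> (\<Sum>k<N. chord_slope f a h k *
      (pos_part (x - ?n (Suc k)) - pos_part (x - ?n (Suc (Suc k)))))"
    by (intro sum_mono ramp)
  finally show ?thesis
    unfolding hinge_interpolant_by_parts
    using mult_nonneg_nonneg[OF chord_slope_nonneg pos_part_nonneg, of N "x - ?n (Suc N)"]
    by linarith
qed

end

lemma mono_nonneg_limit_at_bot:
  fixes f :: "real \<Rightarrow> real"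
  assumes mono: "mono f" and nonneg: "\<And>x. 0 \<le> f x"
  obtains c :: real where "0 \<le> c" and "\<And>z. c \<le> f z" and "(\<lambda>n. f (- real n)) \<longlonglongrightarrow> c"
proof -
  have "bdd_below (range (\<lambda>n :: nat. f (- real n)))"
    using nonneg by (intro bdd_belowI[of _ 0]) auto
  moreover have "decseq (\<lambda>n :: nat. f (- real n))"
    by (intro decseq_SucI monoD[OF mono]) simp
  ultimately have lim: "(\<lambda>n. f (- real n)) \<longlonglongrightarrow> (INF n. f (- real n))"
    by (rule LIMSEQ_decseq_INF)
  show ?thesis
  proof (rule that[OF _ _ lim])
    show "0 \<le> (INF n. f (- real n))"
      using LIMSEQ_le_const[OF lim] nonneg by blast
    show "(INF n. f (- real n)) \<le> f z" for z
    proof (rule LIMSEQ_le_const2[OF lim])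
      obtain n0 :: nat where "- z \<le> real n0"
        using real_arch_simple by blast
      then show "\<exists>n0. \<forall>n\<ge>n0. f (- real n) \<le> f z"
        by (intro exI[of _ n0] allI impI monoD[OF mono]) auto
    qed
  qed
qed

text \<open>Here \<open>2 n (n + 1)\<close> steps of mesh \<open>1 / (n + 1)\<close> take the grid from \<open>-n\<close> to \<open>n\<close>.\<close>

lemma hinge_interpolant_tendsto:
  fixes f :: "real \<Rightarrow> real"
  assumes convex: "convex_on UNIV f" and mono: "mono f"
    and c: "\<And>z. c \<le> f z" and c_lim: "(\<lambda>n. f (- real n)) \<longlonglongrightarrow> c"
  shows "(\<lambda>n. hinge_interpolant f c (- real n) (1 / real (Suc n)) (2 * n * Suc n) x) \<longlonglongrightarrow> f x"
    (is "(\<lambda>n. ?g n) \<longlonglongrightarrow> _")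
proof (rule tendsto_sandwich[of "\<lambda>n. c + f (x - 1 / real (Suc n)) - f (- real n)" _ _ "\<lambda>_. f x"])
  obtain n0 :: nat where n0: "\<bar>x\<bar> + 1 \<le> real n0"
    using real_arch_simple by blast
  have "c + f (x - 1 / real (Suc n)) - f (- real n) \<le> ?g n" if "n0 \<le> n" for n
  proof -
    have "real n0 \<le> real n" "0 < 1 / real (Suc n)" "1 / real (Suc n) \<le> 1"
      using that by simp_all
    then have "- real n \<le> x - 1 / real (Suc n)" "x - 1 / real (Suc n) \<le> real n"
      using n0 abs_ge_self[of x] abs_ge_minus_self[of x] by linarith+
    moreover have "node (- real n) (1 / real (Suc n)) (2 * n * Suc n) = real n"
      by (simp add: node_def field_simps)
    ultimately show ?thesis
      using hinge_interpolant_ge[OF convex mono, where h="1 / real (Suc n)" and c=c and x=x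
          and N="2 * n * Suc n" and a="- real n"]
      by (simp add: min.absorb1 min.absorb2)
  qed
  then show "\<forall>\<^sub>F n in sequentially. c + f (x - 1 / real (Suc n)) - f (- real n) \<le> ?g n"
    by (rule eventually_sequentiallyI)
  show "\<forall>\<^sub>F n in sequentially. ?g n \<le> f x"
    using hinge_interpolant_le[OF convex mono _ c] by simp
  have "(\<lambda>n. x - 1 / real (Suc n)) \<longlonglongrightarrow> x - 0"
    by (intro tendsto_intros LIMSEQ_Suc[OF lim_inverse_n'])
  moreover have "isCont f (x - 0)"
    using convex_on_continuous[OF open_UNIV convex] by (simp add: continuous_on_eq_continuous_at)
  ultimately have "(\<lambda>n. f (x - 1 / real (Suc n))) \<longlonglongrightarrow> f (x - 0)"
    by (rule isCont_tendsto_compose[rotated])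
  then have "(\<lambda>n. c + f (x - 1 / real (Suc n)) - f (- real n)) \<longlonglongrightarrow> c + f (x - 0) - c"
    by (intro tendsto_intros c_lim)
  then show "(\<lambda>n. c + f (x - 1 / real (Suc n)) - f (- real n)) \<longlonglongrightarrow> f x"
    by simp
qed simp

lemma convex_mono_hinge_approximation:
  fixes f :: "real \<Rightarrow> real"
  assumes convex: "convex_on UNIV f" and mono: "mono f" and nonneg: "\<And>x. 0 \<le> f x"
  obtains c :: real and d w :: "nat \<Rightarrow> nat \<Rightarrow> real" and N :: "nat \<Rightarrow> nat"
  where "0 \<le> c" and "\<And>n k. 0 \<le> d n k"
    and "\<And>n x. c + (\<Sum>k<N n. d n k * pos_part (x - w n k)) \<le> f x"
    and "\<And>x. (\<lambda>n. c + (\<Sum>k<N n. d n k * pos_part (x - w n k))) \<longlonglongrightarrow> f x"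
proof -
  obtain c :: real where c: "0 \<le> c" "\<And>z. c \<le> f z" "(\<lambda>n. f (- real n)) \<longlonglongrightarrow> c"
    by (elim mono_nonneg_limit_at_bot[OF mono nonneg])
  define a :: "nat \<Rightarrow> real" where "a n = - real n" for n
  define h :: "nat \<Rightarrow> real" where "h n = 1 / real (Suc n)" for n
  have h_pos: "0 < h n" for n
    by (simp add: h_def)
  show ?thesis
  proof (rule that[of c "\<lambda>n. slope_jump f (a n) (h n)" "\<lambda>n k. node (a n) (h n) (Suc k)"
                     "\<lambda>n. Suc (2 * n * Suc n)"])
    show "0 \<le> slope_jump f (a n) (h n) k" for n k
      by (rule slope_jump_nonneg[OF convex mono h_pos])
    show "c + (\<Sum>k<Suc (2 * n * Suc n). slope_jump f (a n) (h n) k * pos_part (x - node (a n) (h n) (Suc k)))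
        \<le> f x" for n x
      using hinge_interpolant_le[OF convex mono h_pos c(2)] by (simp add: hinge_interpolant_def)
    show "(\<lambda>n. c + (\<Sum>k<Suc (2 * n * Suc n). slope_jump f (a n) (h n) k * pos_part (x - node (a n) (h n) (Suc k))))
        \<longlonglongrightarrow> f x" for x
      using hinge_interpolant_tendsto[OF convex mono c(2,3)]
      by (simp add: hinge_interpolant_def a_def h_def)
  qed (rule c(1))
qed

section \<open>Stop-loss order and convex order\<close>

abbreviation upper_stop_loss :: "'a measure \<Rightarrow> ('a \<Rightarrow> real) \<Rightarrow> real \<Rightarrow> ennreal" where
  "upper_stop_loss M X w \<equiv> \<integral>\<^sup>+\<omega>. ennreal (pos_part (X \<omega> - w)) \<partial>M"

abbreviation lower_stop_loss :: "'a measure \<Rightarrow> ('a \<Rightarrow> real) \<Rightarrow> real \<Rightarrow> ennreal" where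
  "lower_stop_loss M X w \<equiv> \<integral>\<^sup>+\<omega>. ennreal (neg_part (X \<omega> - w)) \<partial>M"

lemma convex_on_borel_measurable:
  fixes f :: "real \<Rightarrow> real"
  assumes "convex_on UNIV f"
  shows "f \<in> borel_measurable borel"
  using convex_on_continuous[OF open_UNIV assms] by (rule borel_measurable_continuous_onI)

lemma nn_integral_hinge_sum_le:
  assumes [measurable]: "X \<in> borel_measurable M" "Y \<in> borel_measurable M"
    and stop_loss: "\<And>w. upper_stop_loss M X w \<le> upper_stop_loss M Y w"
    and "0 \<le> c" and "\<And>k. 0 \<le> d k"
  shows "(\<integral>\<^sup>+\<omega>. ennreal (c + (\<Sum>k\<in>K. d k * pos_part (X \<omega> - w k))) \<partial>M)
       \<le> (\<integral>\<^sup>+\<omega>. ennreal (c + (\<Sum>k\<in>K. d k * pos_part (Y \<omega> - w k))) \<partial>M)"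
proof -
  have "ennreal (c + (\<Sum>k\<in>K. d k * pos_part (z - w k)))
      = ennreal c + (\<Sum>k\<in>K. ennreal (d k) * ennreal (pos_part (z - w k)))" for z
    using assms(4,5) by (simp add: ennreal_plus sum_nonneg ennreal_mult[symmetric])
  then have split: "(\<integral>\<^sup>+\<omega>. ennreal (c + (\<Sum>k\<in>K. d k * pos_part (Z \<omega> - w k))) \<partial>M)
      = (\<integral>\<^sup>+\<omega>. ennreal c \<partial>M) + (\<Sum>k\<in>K. ennreal (d k) * upper_stop_loss M Z (w k))"
    if [measurable]: "Z \<in> borel_measurable M" for Z
    by (simp only:) (subst nn_integral_add; simp add: nn_integral_sum nn_integral_cmult)
  show ?thesis
    unfolding split[OF assms(1)] split[OF assms(2)]
    by (intro add_mono order_refl sum_mono mult_left_mono stop_loss) auto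
qed

lemma nn_integral_convex_mono_le:
  fixes f :: "real \<Rightarrow> real"
  assumes [measurable]: "X \<in> borel_measurable M" "Y \<in> borel_measurable M"
    and stop_loss: "\<And>w. upper_stop_loss M X w \<le> upper_stop_loss M Y w"
    and f: "convex_on UNIV f" "mono f" "\<And>x. 0 \<le> f x"
  shows "(\<integral>\<^sup>+\<omega>. ennreal (f (X \<omega>)) \<partial>M) \<le> (\<integral>\<^sup>+\<omega>. ennreal (f (Y \<omega>)) \<partial>M)"
proof -
  obtain c :: real and d w :: "nat \<Rightarrow> nat \<Rightarrow> real" and N :: "nat \<Rightarrow> nat"
    where c: "0 \<le> c" and d: "\<And>n k. 0 \<le> d n k"
    and g_le: "\<And>n x. c + (\<Sum>k<N n. d n k * pos_part (x - w n k)) \<le> f x"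
    and g_lim: "\<And>x. (\<lambda>n. c + (\<Sum>k<N n. d n k * pos_part (x - w n k))) \<longlonglongrightarrow> f x"
    by (elim convex_mono_hinge_approximation[OF f])
  define g where "g n x = c + (\<Sum>k<N n. d n k * pos_part (x - w n k))" for n x
  have "(\<integral>\<^sup>+\<omega>. ennreal (f (X \<omega>)) \<partial>M) = (\<integral>\<^sup>+\<omega>. liminf (\<lambda>n. ennreal (g n (X \<omega>))) \<partial>M)"
  proof (rule nn_integral_cong)
    fix \<omega>
    have "(\<lambda>n. ennreal (g n (X \<omega>))) \<longlonglongrightarrow> ennreal (f (X \<omega>))"
      unfolding g_def by (rule tendsto_ennrealI[OF g_lim])
    then show "ennreal (f (X \<omega>)) = liminf (\<lambda>n. ennreal (g n (X \<omega>)))"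
      by (simp add: lim_imp_Liminf)
  qed
  also have "\<dots> \<le> liminf (\<lambda>n. \<integral>\<^sup>+\<omega>. ennreal (g n (X \<omega>)) \<partial>M)"
    by (rule nn_integral_liminf) (unfold g_def, measurable)
  also have "\<dots> \<le> (\<integral>\<^sup>+\<omega>. ennreal (f (Y \<omega>)) \<partial>M)"
  proof (rule Liminf_le[OF trivial_limit_sequentially always_eventually], rule allI)
    fix n
    have "(\<integral>\<^sup>+\<omega>. ennreal (g n (X \<omega>)) \<partial>M) \<le> (\<integral>\<^sup>+\<omega>. ennreal (g n (Y \<omega>)) \<partial>M)"
      unfolding g_def by (rule nn_integral_hinge_sum_le[OF assms(1,2) stop_loss c d])
    also have "\<dots> \<le> (\<integral>\<^sup>+\<omega>. ennreal (f (Y \<omega>)) \<partial>M)"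
      unfolding g_def using g_le by (intro nn_integral_mono ennreal_leI)
    finally show "(\<integral>\<^sup>+\<omega>. ennreal (g n (X \<omega>)) \<partial>M) \<le> (\<integral>\<^sup>+\<omega>. ennreal (f (Y \<omega>)) \<partial>M)" .
  qed
  finally show ?thesis .
qed

lemma nn_integral_convex_antimono_le:
  fixes f :: "real \<Rightarrow> real"
  assumes [measurable]: "X \<in> borel_measurable M" "Y \<in> borel_measurable M"
    and stop_loss: "\<And>w. lower_stop_loss M X w \<le> lower_stop_loss M Y w"
    and f: "convex_on UNIV f" "antimono f" "\<And>x. 0 \<le> f x"
  shows "(\<integral>\<^sup>+\<omega>. ennreal (f (X \<omega>)) \<partial>M) \<le> (\<integral>\<^sup>+\<omega>. ennreal (f (Y \<omega>)) \<partial>M)"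
proof -
  have "pos_part (- z - w) = neg_part (z - (- w))" for z w :: real
    by (simp add: pos_part_def neg_part_def)
  then have "upper_stop_loss M (\<lambda>\<omega>. - X \<omega>) w \<le> upper_stop_loss M (\<lambda>\<omega>. - Y \<omega>) w" for w
    using stop_loss[of "- w"] by simp
  moreover have "mono (\<lambda>x. f (- x))"
    using \<open>antimono f\<close> by (simp add: mono_def antimono_def)
  ultimately show ?thesis
    using nn_integral_convex_mono_le[of "\<lambda>\<omega>. - X \<omega>" M "\<lambda>\<omega>. - Y \<omega>" "\<lambda>x. f (- x)"]
      convex_on_reflect[OF f(1)] f(3) by simp
qed

lemma nn_integral_convex_le:
  fixes f :: "real \<Rightarrow> real"
  assumes [measurable]: "X \<in> borel_measurable M" "Y \<in> borel_measurable M"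
    and upper: "\<And>w. upper_stop_loss M X w \<le> upper_stop_loss M Y w"
    and lower: "\<And>w. lower_stop_loss M X w \<le> lower_stop_loss M Y w"
    and f: "convex_on UNIV f" "\<And>x. 0 \<le> f x"
  shows "(\<integral>\<^sup>+\<omega>. ennreal (f (X \<omega>)) \<partial>M) \<le> (\<integral>\<^sup>+\<omega>. ennreal (f (Y \<omega>)) \<partial>M)"
proof -
  obtain g h where g: "convex_on UNIV g" "antimono g" "\<And>x. 0 \<le> g x"
    and h: "convex_on UNIV h" "mono h" "\<And>x. 0 \<le> h x" and f_eq: "\<And>x. f x = g x + h x"
    by (elim convex_nonneg_split_antimono_mono[OF f])
  note [measurable] = convex_on_borel_measurable[OF g(1)] convex_on_borel_measurable[OF h(1)]
  have split: "(\<integral>\<^sup>+\<omega>. ennreal (f (Z \<omega>)) \<partial>M)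
      = (\<integral>\<^sup>+\<omega>. ennreal (g (Z \<omega>)) \<partial>M) + (\<integral>\<^sup>+\<omega>. ennreal (h (Z \<omega>)) \<partial>M)"
    if [measurable]: "Z \<in> borel_measurable M" for Z
  proof -
    have "(\<integral>\<^sup>+\<omega>. ennreal (f (Z \<omega>)) \<partial>M)
        = (\<integral>\<^sup>+\<omega>. ennreal (g (Z \<omega>)) + ennreal (h (Z \<omega>)) \<partial>M)"
      using g(3) h(3) by (simp add: f_eq)
    also have "\<dots> = (\<integral>\<^sup>+\<omega>. ennreal (g (Z \<omega>)) \<partial>M) + (\<integral>\<^sup>+\<omega>. ennreal (h (Z \<omega>)) \<partial>M)"
      by (rule nn_integral_add) measurable
    finally show ?thesis .
  qed
  show ?thesis
    unfolding split[OF assms(1)] split[OF assms(2)]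
    using nn_integral_convex_antimono_le[OF assms(1,2) lower g]
      nn_integral_convex_mono_le[OF assms(1,2) upper h]
    by (rule add_mono)
qed

lemma (in prob_space) nn_integral_pos_part_shift:
  assumes [measurable]: "V \<in> borel_measurable M" and "0 \<le> c"
  shows "(\<integral>\<^sup>+\<omega>. ennreal (pos_part (V \<omega> + c)) \<partial>M) + (\<integral>\<^sup>+\<omega>. ennreal (min (neg_part (V \<omega>)) c) \<partial>M)
       = (\<integral>\<^sup>+\<omega>. ennreal (pos_part (V \<omega>)) \<partial>M) + ennreal c"
proof -
  have "ennreal (pos_part (z + c)) + ennreal (min (neg_part z) c) = ennreal (pos_part z) + ennreal c"
    for z
  proof -
    have "pos_part (z + c) + min (neg_part z) c = pos_part z + c"
      using \<open>0 \<le> c\<close> by (auto simp: pos_part_def neg_part_def)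
    then show ?thesis
      using \<open>0 \<le> c\<close> by (simp add: ennreal_plus[symmetric] del: ennreal_plus)
  qed
  then have "(\<integral>\<^sup>+\<omega>. ennreal (pos_part (V \<omega> + c)) \<partial>M) + (\<integral>\<^sup>+\<omega>. ennreal (min (neg_part (V \<omega>)) c) \<partial>M)
      = (\<integral>\<^sup>+\<omega>. ennreal (pos_part (V \<omega>)) + ennreal c \<partial>M)"
    by (subst nn_integral_add[symmetric]) simp_all
  also have "\<dots> = (\<integral>\<^sup>+\<omega>. ennreal (pos_part (V \<omega>)) \<partial>M) + ennreal c"
    by (subst nn_integral_add) (simp_all add: emeasure_space_1)
  finally show ?thesis .
qed

lemma nn_integral_SUP_min:
  fixes g :: "'a \<Rightarrow> real"
  assumes [measurable]: "g \<in> borel_measurable M" and nonneg: "\<And>x. 0 \<le> g x"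
  shows "(\<integral>\<^sup>+x. ennreal (g x) \<partial>M) = (SUP n. \<integral>\<^sup>+x. ennreal (min (g x) (real n)) \<partial>M)"
proof -
  have "(SUP n. ennreal (min z (real n))) = ennreal z" if "0 \<le> z" for z
  proof (rule antisym)
    show "(SUP n. ennreal (min z (real n))) \<le> ennreal z"
      by (intro SUP_least ennreal_leI) simp
    obtain n :: nat where "z \<le> real n"
      using real_arch_simple by blast
    then show "ennreal z \<le> (SUP n. ennreal (min z (real n)))"
      by (intro SUP_upper2[of n]) auto
  qed
  then have "(\<integral>\<^sup>+x. ennreal (g x) \<partial>M) = (\<integral>\<^sup>+x. (SUP n. ennreal (min (g x) (real n))) \<partial>M)"
    using nonneg by simp
  also have "\<dots> = (SUP n. \<integral>\<^sup>+x. ennreal (min (g x) (real n)) \<partial>M)"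
    by (rule nn_integral_monotone_convergence_SUP)
       (auto intro!: incseq_SucI le_funI ennreal_leI)
  finally show ?thesis .
qed

lemma convex_parts_le_of_stop_loss:
  fixes u :: "real \<Rightarrow> real"
  assumes "prob_space M"
    and [measurable]: "X \<in> borel_measurable M" "Y \<in> borel_measurable M"
    and upper: "\<And>w. upper_stop_loss M X w \<le> upper_stop_loss M Y w"
    and lower: "\<And>w. lower_stop_loss M X w \<le> lower_stop_loss M Y w"
    and u: "convex_on UNIV u"
  shows "(\<integral>\<^sup>+\<omega>. ennreal (pos_part (u (X \<omega>))) \<partial>M) + (\<integral>\<^sup>+\<omega>. ennreal (neg_part (u (Y \<omega>))) \<partial>M)
       \<le> (\<integral>\<^sup>+\<omega>. ennreal (pos_part (u (Y \<omega>))) \<partial>M) + (\<integral>\<^sup>+\<omega>. ennreal (neg_part (u (X \<omega>))) \<partial>M)"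
    (is "?PX + ?NY \<le> ?PY + ?NX")
proof -
  note [measurable] = convex_on_borel_measurable[OF u]
  define T where "T Z n = (\<integral>\<^sup>+\<omega>. ennreal (min (neg_part (u (Z \<omega>))) (real n)) \<partial>M)" for Z and n :: nat
  define F where "F Z n = (\<integral>\<^sup>+\<omega>. ennreal (pos_part (u (Z \<omega>) + real n)) \<partial>M)" for Z and n :: nat
  have F_T: "F Z n + T Z n = (\<integral>\<^sup>+\<omega>. ennreal (pos_part (u (Z \<omega>))) \<partial>M) + ennreal (real n)"
    if "Z \<in> borel_measurable M" for Z n
    unfolding F_def T_def using that
    by (intro prob_space.nn_integral_pos_part_shift[OF \<open>prob_space M\<close>]) simp_all
  have F_le: "F X n \<le> F Y n" for n
    unfolding F_def
  proof (rule nn_integral_convex_le[OF assms(2,3) upper lower])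
    show "convex_on UNIV (\<lambda>x. pos_part (u x + real n))"
      using convex_on_pos_part[OF convex_on_add[OF u convex_on_const[THEN iffD2]]] by simp
  qed simp
  have bound: "?PX + T Y n \<le> ?PY + ?NX" for n
  proof -
    have "ennreal (real n) + (?PX + T Y n) = (F X n + T X n) + T Y n"
      unfolding F_T[OF assms(2)] by (simp add: ac_simps)
    also have "\<dots> \<le> (F Y n + T X n) + T Y n"
      using F_le[of n] by (intro add_right_mono)
    also have "\<dots> = ennreal (real n) + (?PY + T X n)"
      using F_T[OF assms(3), of n] by (simp add: ac_simps)
    also have "\<dots> \<le> ennreal (real n) + (?PY + ?NX)"
      unfolding T_def by (intro add_left_mono nn_integral_mono ennreal_leI) simp
    finally show ?thesis
      by (simp add: ennreal_add_left_cancel_le)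
  qed
  have "?NY = (SUP n. T Y n)"
    unfolding T_def by (rule nn_integral_SUP_min) simp_all
  then have "?PX + ?NY = (SUP n. ?PX + T Y n)"
    using ennreal_SUP_add_right[of UNIV ?PX "T Y"] by simp
  also have "\<dots> \<le> ?PY + ?NX"
    by (rule SUP_least) (rule bound)
  finally show ?thesis .
qed

lemma enn2ereal_diff_le_diff:
  fixes a b c d :: ennreal
  assumes le: "a + d \<le> c + b" and "a < \<infinity> \<or> b < \<infinity>" and "c < \<infinity> \<or> d < \<infinity>"
  shows "enn2ereal a - enn2ereal b \<le> enn2ereal c - enn2ereal d"
proof (cases "b = \<infinity> \<or> c = \<infinity>")
  case True
  then show ?thesis
    using assms(2,3) by (cases a; cases d) (auto simp: top_ereal_def)
next
  case False
  then have "c + b < \<infinity>"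
    by (simp add: less_top[symmetric])
  then have "a + d < \<infinity>"
    by (rule le_less_trans[OF le])
  then obtain ra rb rc rd where "a = ennreal ra" "b = ennreal rb" "c = ennreal rc" "d = ennreal rd"
    and "0 \<le> ra" "0 \<le> rb" "0 \<le> rc" "0 \<le> rd"
    using False by (cases a; cases b; cases c; cases d) auto
  with le show ?thesis
    by (simp add: ennreal_plus[symmetric] del: ennreal_plus)
qed

lemma ext_expectation_nonneg:
  assumes "\<And>\<omega>. 0 \<le> g \<omega>"
  shows "ext_expectation M g = enn2ereal (\<integral>\<^sup>+\<omega>. ennreal (g \<omega>) \<partial>M)"
  using assms by (simp add: ext_expectation_def pos_part_def neg_part_def max.absorb1 zero_ennreal.rep_eq)

lemma expectation_well_defined_nonneg:
  assumes "\<And>\<omega>. 0 \<le> g \<omega>"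
  shows "expectation_well_defined M g"
  using assms by (simp add: expectation_well_defined_def neg_part_def max.absorb2)

lemma ext_expectation_convex_le_of_stop_loss:
  fixes u :: "real \<Rightarrow> real"
  assumes "prob_space M" "X \<in> borel_measurable M" "Y \<in> borel_measurable M"
    and "\<And>w. upper_stop_loss M X w \<le> upper_stop_loss M Y w"
    and "\<And>w. lower_stop_loss M X w \<le> lower_stop_loss M Y w"
    and "convex_on UNIV u"
    and "expectation_well_defined M (\<lambda>\<omega>. u (X \<omega>))" "expectation_well_defined M (\<lambda>\<omega>. u (Y \<omega>))"
  shows "ext_expectation M (\<lambda>\<omega>. u (X \<omega>)) \<le> ext_expectation M (\<lambda>\<omega>. u (Y \<omega>))"
  unfolding ext_expectation_def
  using assms(7,8) unfolding expectation_well_defined_def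
  by (intro enn2ereal_diff_le_diff convex_parts_le_of_stop_loss[OF assms(1-6)])

lemma cx_le_iff_stop_loss:
  fixes X Y :: "'a \<Rightarrow> real"
  assumes "prob_space M" "X \<in> borel_measurable M" "Y \<in> borel_measurable M"
  shows "cx_le M X Y \<longleftrightarrow>
    (\<forall>w. ext_expectation M (\<lambda>\<omega>. neg_part (X \<omega> - w)) \<le> ext_expectation M (\<lambda>\<omega>. neg_part (Y \<omega> - w)) \<and>
         ext_expectation M (\<lambda>\<omega>. pos_part (X \<omega> - w)) \<le> ext_expectation M (\<lambda>\<omega>. pos_part (Y \<omega> - w)))"
    (is "_ \<longleftrightarrow> (\<forall>w. ?lower w \<and> ?upper w)")
proof
  have affine: "convex_on UNIV (\<lambda>x. s * x + t)" for s t :: real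
    by (rule convex_onI) (simp_all add: algebra_simps)
  have hinges_convex: "convex_on UNIV (\<lambda>x. neg_part (x - w))" "convex_on UNIV (\<lambda>x. pos_part (x - w))"
    for w :: real
    using convex_on_pos_part[OF affine[of "-1" w]] convex_on_pos_part[OF affine[of 1 "- w"]]
    by (simp_all add: neg_part_def pos_part_def)
  assume cx: "cx_le M X Y"
  show "\<forall>w. ?lower w \<and> ?upper w"
  proof
    fix w
    show "?lower w \<and> ?upper w"
      using cx[unfolded cx_le_def, rule_format, OF hinges_convex(1)[of w]]
        cx[unfolded cx_le_def, rule_format, OF hinges_convex(2)[of w]]
      by (simp add: expectation_well_defined_nonneg)
  qed
next
  assume "\<forall>w. ?lower w \<and> ?upper w"
  then have "upper_stop_loss M X w \<le> upper_stop_loss M Y w"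
    and "lower_stop_loss M X w \<le> lower_stop_loss M Y w" for w
    by (simp_all add: ext_expectation_nonneg less_eq_ennreal.rep_eq)
  then show "cx_le M X Y"
    unfolding cx_le_def using ext_expectation_convex_le_of_stop_loss[OF assms] by blast
qed

section \<open>Tail integrals of monotone functions\<close>

lemma ext_set_integral_le_pos_part:
  "ext_set_integral S f \<le> enn2ereal (\<integral>\<^sup>+t\<in>S. ennreal (pos_part (f t)) \<partial>lborel)"
  unfolding ext_set_integral_def by (rule ereal_diff_le_self) simp

lemma ext_set_integral_nonneg:
  assumes "\<And>t. t \<in> S \<Longrightarrow> 0 \<le> f t"
  shows "ext_set_integral S f = enn2ereal (\<integral>\<^sup>+t\<in>S. ennreal (pos_part (f t)) \<partial>lborel)"
proof -
  have "neg_part (f t) = 0" if "t \<in> S" for t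
    using assms[OF that] by (simp add: neg_part_def)
  then have "(\<lambda>t. ennreal (neg_part (f t)) * indicator S t) = (\<lambda>t. 0)"
    by (auto simp: fun_eq_iff indicator_def)
  then show ?thesis
    by (simp add: ext_set_integral_def zero_ennreal.rep_eq)
qed

lemma set_nn_integral_parts_shift:
  fixes q :: "real \<Rightarrow> real"
  assumes [measurable]: "q \<in> borel_measurable borel" "S \<in> sets borel"
    and finite_S: "emeasure lborel S < \<infinity>"
  shows "(\<integral>\<^sup>+t\<in>S. ennreal (pos_part (q t)) \<partial>lborel) + ennreal (neg_part w * measure lborel S)
           + (\<integral>\<^sup>+t\<in>S. ennreal (neg_part (q t - w)) \<partial>lborel)
       = (\<integral>\<^sup>+t\<in>S. ennreal (neg_part (q t)) \<partial>lborel) + ennreal (pos_part w * measure lborel S)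
           + (\<integral>\<^sup>+t\<in>S. ennreal (pos_part (q t - w)) \<partial>lborel)"
proof -
  let ?I = "\<lambda>g. \<integral>\<^sup>+t\<in>S. ennreal (g t) \<partial>lborel"
  have add3: "?I (\<lambda>t. g1 t + g2 t + g3 t) = ?I g1 + ?I g2 + ?I g3"
    if [measurable]: "g1 \<in> borel_measurable borel" "g2 \<in> borel_measurable borel"
      "g3 \<in> borel_measurable borel"
      and "\<And>t. 0 \<le> g1 t" "\<And>t. 0 \<le> g2 t" "\<And>t. 0 \<le> g3 t" for g1 g2 g3
  proof -
    have "?I (\<lambda>t. g1 t + g2 t + g3 t)
        = (\<integral>\<^sup>+t\<in>S. (ennreal (g1 t) + ennreal (g2 t)) + ennreal (g3 t) \<partial>lborel)"
      using that(4-6) by (simp add: add_nonneg_nonneg)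
    also have "\<dots> = (\<integral>\<^sup>+t\<in>S. ennreal (g1 t) + ennreal (g2 t) \<partial>lborel) + ?I g3"
      by (rule nn_set_integral_add) measurable
    also have "(\<integral>\<^sup>+t\<in>S. ennreal (g1 t) + ennreal (g2 t) \<partial>lborel) = ?I g1 + ?I g2"
      by (rule nn_set_integral_add) measurable
    finally show ?thesis .
  qed
  have const: "?I (\<lambda>_. c) = ennreal (c * measure lborel S)" if "0 \<le> c" for c
    using that finite_S
    by (simp add: nn_integral_cmult_indicator ennreal_mult emeasure_eq_ennreal_measure)
  have "?I (\<lambda>t. pos_part (q t)) + ?I (\<lambda>_. neg_part w) + ?I (\<lambda>t. neg_part (q t - w))
      = ?I (\<lambda>t. pos_part (q t) + neg_part w + neg_part (q t - w))"
    by (rule add3[symmetric], measurable, measurable, measurable)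
  also have "\<dots> = ?I (\<lambda>t. neg_part (q t) + pos_part w + pos_part (q t - w))"
    by (rule arg_cong[where f = ?I]) (auto simp: fun_eq_iff pos_part_def neg_part_def)
  also have "\<dots> = ?I (\<lambda>t. neg_part (q t)) + ?I (\<lambda>_. pos_part w) + ?I (\<lambda>t. pos_part (q t - w))"
    by (rule add3, measurable, measurable, measurable)
  finally show ?thesis
    by (simp add: const)
qed

lemma enn2ereal_diff_eq_shift:
  fixes a b c d :: ennreal and x y :: real
  assumes eq: "a + ennreal x + d = b + ennreal y + c" and "b < \<infinity>" "d < \<infinity>" "0 \<le> x" "0 \<le> y"
  shows "enn2ereal a - enn2ereal b = enn2ereal c - enn2ereal d + ereal (y - x)"
proof -
  obtain rb rd where b: "b = ennreal rb" "0 \<le> rb" and d: "d = ennreal rd" "0 \<le> rd"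
    using assms(2,3) by (cases b rule: ennreal_cases; cases d rule: ennreal_cases) auto
  show ?thesis
  proof (cases "a = \<infinity>")
    case True
    then have "ennreal rb + ennreal y + c = \<infinity>"
      using eq by (simp add: b d top_add)
    then have "c = \<infinity>"
      by (simp add: ennreal_add_eq_top)
    with True show ?thesis
      using b d by simp
  next
    case False
    then obtain ra where a: "a = ennreal ra" "0 \<le> ra"
      by (cases a rule: ennreal_cases) auto
    then have "c \<noteq> \<infinity>"
      using eq b d by (auto simp: ennreal_add_eq_top)
    then obtain rc where c: "c = ennreal rc" "0 \<le> rc"
      by (cases c rule: ennreal_cases) auto
    have "ennreal (ra + x + rd) = ennreal (rb + y + rc)"
      using eq a b c d assms(4,5) by (simp add: ennreal_plus)
    then have "ra + x + rd = rb + y + rc"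
      using a b c d assms(4,5) by (subst (asm) ennreal_inj) simp_all
    then show ?thesis
      using a b c d by simp
  qed
qed

lemma ext_set_integral_shift:
  fixes q :: "real \<Rightarrow> real"
  assumes [measurable]: "q \<in> borel_measurable borel" "S \<in> sets borel"
    and finite_S: "emeasure lborel S < \<infinity>"
    and finite_neg: "(\<integral>\<^sup>+t\<in>S. ennreal (neg_part (q t)) \<partial>lborel) < \<infinity>"
  shows "ext_set_integral S q = ext_set_integral S (\<lambda>t. q t - w) + ereal (w * measure lborel S)"
proof -
  have "neg_part (q t - w) \<le> neg_part (q t) + pos_part w" for t
    by (auto simp: neg_part_def pos_part_def)
  then have "(\<integral>\<^sup>+t\<in>S. ennreal (neg_part (q t - w)) \<partial>lborel)
      \<le> (\<integral>\<^sup>+t\<in>S. ennreal (neg_part (q t)) + ennreal (pos_part w) \<partial>lborel)"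
    by (intro nn_integral_mono mult_right_mono) (simp_all add: ennreal_plus[symmetric] del: ennreal_plus)
  also have "\<dots> = (\<integral>\<^sup>+t\<in>S. ennreal (neg_part (q t)) \<partial>lborel) + (\<integral>\<^sup>+t\<in>S. ennreal (pos_part w) \<partial>lborel)"
    by (rule nn_set_integral_add) measurable
  also have "\<dots> = (\<integral>\<^sup>+t\<in>S. ennreal (neg_part (q t)) \<partial>lborel) + ennreal (pos_part w) * emeasure lborel S"
    by (simp add: nn_integral_cmult_indicator)
  also have "\<dots> < \<infinity>"
    using finite_neg finite_S by (simp add: ennreal_mult_less_top)
  finally have finite_neg': "(\<integral>\<^sup>+t\<in>S. ennreal (neg_part (q t - w)) \<partial>lborel) < \<infinity>" .
  have "w * measure lborel S = pos_part w * measure lborel S - neg_part w * measure lborel S"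
    by (simp add: pos_part_def neg_part_def max_def algebra_simps)
  then show ?thesis
    unfolding ext_set_integral_def
    using enn2ereal_diff_eq_shift[OF set_nn_integral_parts_shift[OF assms(1-3)] finite_neg finite_neg']
    by simp
qed

lemma set_nn_integral_Ioo_bounded:
  fixes f :: "real \<Rightarrow> real"
  assumes "\<And>t. t \<in> {a<..<b} \<Longrightarrow> f t \<le> c"
  shows "(\<integral>\<^sup>+t\<in>{a<..<b}. ennreal (f t) \<partial>lborel) < \<infinity>"
proof -
  have "(\<integral>\<^sup>+t\<in>{a<..<b}. ennreal (f t) \<partial>lborel) \<le> (\<integral>\<^sup>+t\<in>{a<..<b}. ennreal c \<partial>lborel)"
    using assms by (intro nn_integral_mono) (simp add: indicator_def ennreal_leI)
  also have "\<dots> = ennreal c * emeasure lborel {a<..<b}"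
    by (simp add: nn_integral_cmult_indicator)
  also have "\<dots> < \<infinity>"
    using emeasure_bounded_finite[of "{a<..<b}"] by (simp add: ennreal_mult_less_top)
  finally show ?thesis .
qed

lemma tail_neg_part_finite:
  fixes q :: "real \<Rightarrow> real"
  assumes q: "mono_on {0<..<1} q" and p: "0 < p" "p < 1"
  shows "(\<integral>\<^sup>+t\<in>{p<..<1}. ennreal (neg_part (q t)) \<partial>lborel) < \<infinity>"
proof (rule set_nn_integral_Ioo_bounded)
  fix t
  assume "t \<in> {p<..<1}"
  then have "q p \<le> q t"
    using mono_onD[OF q, of p t] p by simp
  then show "neg_part (q t) \<le> neg_part (q p)"
    by (simp add: neg_part_def)
qed

lemma head_pos_part_finite:
  fixes q :: "real \<Rightarrow> real"
  assumes q: "mono_on {0<..<1} q" and p: "0 < p" "p < 1"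
  shows "(\<integral>\<^sup>+t\<in>{0<..<p}. ennreal (pos_part (q t)) \<partial>lborel) < \<infinity>"
proof (rule set_nn_integral_Ioo_bounded)
  fix t
  assume "t \<in> {0<..<p}"
  then have "q t \<le> q p"
    using mono_onD[OF q, of t p] p by simp
  then show "pos_part (q t) \<le> pos_part (q p)"
    by (simp add: pos_part_def)
qed

lemma ext_set_integral_tail_shift:
  fixes q :: "real \<Rightarrow> real"
  assumes "q \<in> borel_measurable borel" "mono_on {0<..<1} q" "0 < p" "p < 1"
  shows "ext_set_integral {p<..<1} q = ext_set_integral {p<..<1} (\<lambda>t. q t - w) + ereal (w * (1 - p))"
  using ext_set_integral_shift[OF assms(1) _ _ tail_neg_part_finite[OF assms(2-4)]] assms(4)
  by simp

lemma set_nn_integral_mono_set: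
  fixes f :: "real \<Rightarrow> ennreal"
  assumes "A \<subseteq> B"
  shows "(\<integral>\<^sup>+t\<in>A. f t \<partial>lborel) \<le> (\<integral>\<^sup>+t\<in>B. f t \<partial>lborel)"
  using assms by (intro nn_integral_mono mult_left_mono) (auto simp: indicator_def)

lemma stop_loss_le_imp_upper_tail_le:
  fixes q r :: "real \<Rightarrow> real"
  assumes q: "q \<in> borel_measurable borel" "mono_on {0<..<1} q"
    and r: "r \<in> borel_measurable borel" "mono_on {0<..<1} r"
    and stop_loss: "\<And>w. (\<integral>\<^sup>+t\<in>{0<..<1}. ennreal (pos_part (q t - w)) \<partial>lborel)
                        \<le> (\<integral>\<^sup>+t\<in>{0<..<1}. ennreal (pos_part (r t - w)) \<partial>lborel)"
    and p: "0 < p" "p < 1"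
  shows "ext_set_integral {p<..<1} q \<le> ext_set_integral {p<..<1} r"
proof -
  define w where "w = r p"
  let ?c = "ereal (w * (1 - p))"
  have r_tail: "(\<integral>\<^sup>+t\<in>{0<..<1}. ennreal (pos_part (r t - w)) \<partial>lborel)
      = (\<integral>\<^sup>+t\<in>{p<..<1}. ennreal (pos_part (r t - w)) \<partial>lborel)"
  proof (intro nn_integral_cong)
    fix t
    show "ennreal (pos_part (r t - w)) * indicator {0<..<1} t = ennreal (pos_part (r t - w)) * indicator {p<..<1} t"
      using mono_onD[OF r(2), of t p] p by (cases "0 < t \<and> t \<le> p") (auto simp: pos_part_def w_def indicator_def)
  qed
  have "ext_set_integral {p<..<1} q = ext_set_integral {p<..<1} (\<lambda>t. q t - w) + ?c"
    by (rule ext_set_integral_tail_shift[OF q p])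
  also have "\<dots> \<le> enn2ereal (\<integral>\<^sup>+t\<in>{p<..<1}. ennreal (pos_part (q t - w)) \<partial>lborel) + ?c"
    by (intro add_right_mono ext_set_integral_le_pos_part)
  also have "\<dots> \<le> enn2ereal (\<integral>\<^sup>+t\<in>{0<..<1}. ennreal (pos_part (r t - w)) \<partial>lborel) + ?c"
    using order_trans[OF set_nn_integral_mono_set stop_loss, of "{p<..<1}"] p
    by (intro add_right_mono) (simp add: less_eq_ennreal.rep_eq[symmetric] subset_eq)
  also have "\<dots> = enn2ereal (\<integral>\<^sup>+t\<in>{p<..<1}. ennreal (pos_part (r t - w)) \<partial>lborel) + ?c"
    by (simp only: r_tail)
  also have "\<dots> = ext_set_integral {p<..<1} (\<lambda>t. r t - w) + ?c"
    using mono_onD[OF r(2), of p] p by (subst ext_set_integral_nonneg) (auto simp: w_def)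
  also have "\<dots> = ext_set_integral {p<..<1} r"
    by (rule ext_set_integral_tail_shift[OF r p, symmetric])
  finally show ?thesis .
qed

lemma upper_tail_le_imp_stop_loss_le_on_tail:
  fixes q r :: "real \<Rightarrow> real"
  assumes q: "q \<in> borel_measurable borel" "mono_on {0<..<1} q"
    and r: "r \<in> borel_measurable borel" "mono_on {0<..<1} r"
    and p: "0 < p" "p < 1"
    and tail: "ext_set_integral {p<..<1} q \<le> ext_set_integral {p<..<1} r"
    and above: "\<And>t. t \<in> {p<..<1} \<Longrightarrow> w \<le> q t"
  shows "(\<integral>\<^sup>+t\<in>{p<..<1}. ennreal (pos_part (q t - w)) \<partial>lborel)
       \<le> (\<integral>\<^sup>+t\<in>{0<..<1}. ennreal (pos_part (r t - w)) \<partial>lborel)"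
proof -
  let ?c = "ereal (w * (1 - p))"
  have "enn2ereal (\<integral>\<^sup>+t\<in>{p<..<1}. ennreal (pos_part (q t - w)) \<partial>lborel) + ?c
      = ext_set_integral {p<..<1} (\<lambda>t. q t - w) + ?c"
    using above by (subst ext_set_integral_nonneg) auto
  also have "\<dots> = ext_set_integral {p<..<1} q"
    by (rule ext_set_integral_tail_shift[OF q p, symmetric])
  also have "\<dots> \<le> ext_set_integral {p<..<1} r"
    by (rule tail)
  also have "\<dots> = ext_set_integral {p<..<1} (\<lambda>t. r t - w) + ?c"
    by (rule ext_set_integral_tail_shift[OF r p])
  also have "\<dots> \<le> enn2ereal (\<integral>\<^sup>+t\<in>{p<..<1}. ennreal (pos_part (r t - w)) \<partial>lborel) + ?c"
    by (intro add_right_mono ext_set_integral_le_pos_part)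
  also have "\<dots> \<le> enn2ereal (\<integral>\<^sup>+t\<in>{0<..<1}. ennreal (pos_part (r t - w)) \<partial>lborel) + ?c"
    using set_nn_integral_mono_set[of "{p<..<1}" "{0<..<1}"] p
    by (intro add_right_mono) (simp add: less_eq_ennreal.rep_eq[symmetric] subset_eq)
  finally show ?thesis
    by (simp add: ereal_add_le_add_iff2 less_eq_ennreal.rep_eq)
qed

lemma mono_on_threshold:
  fixes q :: "real \<Rightarrow> real"
  assumes q: "mono_on {0<..<1} q"
  obtains s where "0 \<le> s" "s \<le> 1"
    and "\<And>t. 0 < t \<Longrightarrow> t < s \<Longrightarrow> q t < w" and "\<And>t. s < t \<Longrightarrow> t < 1 \<Longrightarrow> w \<le> q t"
proof -
  define A where "A = {t \<in> {0<..<1}. w \<le> q t}"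
  show ?thesis
  proof (cases "A = {}")
    case True
    then show ?thesis
      by (intro that[of 1]) (auto simp: A_def not_le)
  next
    case False
    have bdd: "bdd_below A"
      by (rule bdd_belowI[of _ 0]) (simp add: A_def)
    obtain a where a: "a \<in> A"
      using False by blast
    have "Inf A < 1"
      using cInf_lower[OF a bdd] a by (simp add: A_def)
    show ?thesis
    proof (rule that[of "Inf A"])
      show "0 \<le> Inf A" "Inf A \<le> 1"
        using cInf_greatest[OF False, of 0] \<open>Inf A < 1\<close> by (auto simp: A_def)
      show "q t < w" if "0 < t" "t < Inf A" for t
      proof -
        have "t \<notin> A"
          using that cInf_lower[OF _ bdd, of t] by force
        then show ?thesis
          using that \<open>Inf A < 1\<close> by (auto simp: A_def)
      qed
      show "w \<le> q t" if "Inf A < t" "t < 1" for t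
      proof -
        obtain b where "b \<in> A" "b < t"
          using \<open>Inf A < t\<close> cInf_less_iff[OF False bdd] by blast
        then show ?thesis
          using mono_onD[OF q, of b t] that by (auto simp: A_def)
      qed
    qed
  qed
qed

lemma set_nn_integral_Ioo_SUP:
  fixes g :: "real \<Rightarrow> ennreal"
  assumes [measurable]: "g \<in> borel_measurable borel" and s: "s < 1"
  shows "(\<integral>\<^sup>+t\<in>{s<..<1}. g t \<partial>lborel)
       = (SUP n. \<integral>\<^sup>+t\<in>{s + (1 - s) / (real n + 2)<..<1}. g t \<partial>lborel)"
proof -
  define B where "B n = {s + (1 - s) / (real n + 2)<..<1}" for n :: nat
  have B_pos: "0 < (1 - s) / (real n + 2)" for n
    using s by simp
  have "(1 - s) / (real n' + 2) \<le> (1 - s) / (real n + 2)" if "n \<le> n'" for n n'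
    using s that by (intro divide_left_mono) auto
  then have "incseq B"
    by (intro monoI) (fastforce simp: B_def)
  moreover have "(\<Union>n. B n) = {s<..<1}"
  proof (intro subset_antisym subsetI)
    fix t
    assume t: "t \<in> {s<..<1}"
    obtain n :: nat where "(1 - s) / (t - s) < real n"
      using reals_Archimedean2 by blast
    then have "(1 - s) / (real n + 2) < t - s"
      using t by (simp add: field_simps)
    then have "t \<in> B n"
      using t by (simp add: B_def)
    then show "t \<in> (\<Union>n. B n)"
      by blast
  next
    fix t
    assume "t \<in> (\<Union>n. B n)"
    then obtain n where "t \<in> B n"
      by blast
    then show "t \<in> {s<..<1}"
      using B_pos[of n] by (simp add: B_def)
  qed
  ultimately have "emeasure (density lborel g) {s<..<1} = (SUP n. emeasure (density lborel g) (B n))"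
    by (subst SUP_emeasure_incseq) (auto simp: B_def)
  then show ?thesis
    by (simp add: emeasure_density B_def)
qed

text \<open>Past the point \<open>s\<close> where \<open>q\<close> crosses \<open>w\<close> the previous lemma applies on every tail
  \<open>(s + \<epsilon>, 1)\<close>, and before \<open>s\<close> the integrand vanishes.\<close>

lemma upper_tail_le_imp_stop_loss_le:
  fixes q r :: "real \<Rightarrow> real"
  assumes q: "q \<in> borel_measurable borel" "mono_on {0<..<1} q"
    and r: "r \<in> borel_measurable borel" "mono_on {0<..<1} r"
    and tails: "\<And>p. 0 < p \<Longrightarrow> p < 1 \<Longrightarrow> ext_set_integral {p<..<1} q \<le> ext_set_integral {p<..<1} r"
  shows "(\<integral>\<^sup>+t\<in>{0<..<1}. ennreal (pos_part (q t - w)) \<partial>lborel)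
       \<le> (\<integral>\<^sup>+t\<in>{0<..<1}. ennreal (pos_part (r t - w)) \<partial>lborel)"
    (is "?L \<le> ?R")
proof -
  obtain s where s: "0 \<le> s" "s \<le> 1" and below: "\<And>t. 0 < t \<Longrightarrow> t < s \<Longrightarrow> q t < w"
    and above: "\<And>t. s < t \<Longrightarrow> t < 1 \<Longrightarrow> w \<le> q t"
    by (elim mono_on_threshold[OF q(2)])
  have "ennreal (pos_part (q t - w)) * indicator {0<..<1} t
      = ennreal (pos_part (q t - w)) * indicator {s<..<1} t" if "t \<noteq> s" for t
    using below[of t] that s by (cases "0 < t \<and> t < s") (auto simp: pos_part_def indicator_def)
  then have "?L = (\<integral>\<^sup>+t\<in>{s<..<1}. ennreal (pos_part (q t - w)) \<partial>lborel)"
    by (intro nn_integral_cong_AE AE_mp[OF AE_lborel_singleton[of s] AE_I2]) auto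
  also have "\<dots> \<le> ?R"
  proof (cases "s < 1")
    case True
    have "(\<integral>\<^sup>+t\<in>{s + (1 - s) / (real n + 2)<..<1}. ennreal (pos_part (q t - w)) \<partial>lborel) \<le> ?R"
      for n
    proof -
      define p where "p = s + (1 - s) / (real n + 2)"
      have "0 < (1 - s) / (real n + 2)" "(1 - s) / (real n + 2) < 1 - s"
        using True divide_strict_left_mono[of 1 "real n + 2" "1 - s"] by simp_all
      then have p: "0 < p" "p < 1" "s < p"
        using s by (simp_all add: p_def)
      show ?thesis
        unfolding p_def[symmetric] using p above
        by (intro upper_tail_le_imp_stop_loss_le_on_tail[OF q r p(1,2) tails[OF p(1,2)]]) auto
    qed
    then show ?thesis
      using True q(1) by (simp add: set_nn_integral_Ioo_SUP SUP_least)
  qed simp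
  finally show ?thesis .
qed

lemma upper_tails_le_iff_stop_loss_le:
  fixes q r :: "real \<Rightarrow> real"
  assumes "q \<in> borel_measurable borel" "mono_on {0<..<1} q"
    and "r \<in> borel_measurable borel" "mono_on {0<..<1} r"
  shows "(\<forall>p\<in>{0<..<1}. ext_set_integral {p<..<1} q \<le> ext_set_integral {p<..<1} r) \<longleftrightarrow>
    (\<forall>w. (\<integral>\<^sup>+t\<in>{0<..<1}. ennreal (pos_part (q t - w)) \<partial>lborel)
           \<le> (\<integral>\<^sup>+t\<in>{0<..<1}. ennreal (pos_part (r t - w)) \<partial>lborel))"
  using upper_tail_le_imp_stop_loss_le[OF assms] stop_loss_le_imp_upper_tail_le[OF assms]
  by auto

lemma set_nn_integral_reflect:
  fixes f :: "real \<Rightarrow> ennreal"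
  assumes [measurable]: "f \<in> borel_measurable borel"
  shows "(\<integral>\<^sup>+t\<in>{a<..<b}. f (1 - t) \<partial>lborel) = (\<integral>\<^sup>+t\<in>{1 - b<..<1 - a}. f t \<partial>lborel)"
  using nn_integral_real_affine[of "\<lambda>t. f t * indicator {1 - b<..<1 - a} t" "-1" 1]
  by (simp add: indicator_def conj_commute)

text \<open>The finiteness hypothesis matters: \<open>\<infinity> - \<infinity> = \<infinity>\<close> in \<open>ereal\<close>, so negation does not
  commute with the difference of two infinite parts.\<close>

lemma ext_set_integral_reflect:
  fixes q :: "real \<Rightarrow> real"
  assumes [measurable]: "q \<in> borel_measurable borel"
    and finite: "(\<integral>\<^sup>+t\<in>{0<..<1 - p}. ennreal (pos_part (q t)) \<partial>lborel) < \<infinity>"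
  shows "ext_set_integral {p<..<1} (\<lambda>t. - q (1 - t)) = - ext_set_integral {0<..<1 - p} q"
proof -
  have "pos_part (- x) = neg_part x" "neg_part (- x) = pos_part x" for x :: real
    by (simp_all add: pos_part_def neg_part_def)
  then have "ext_set_integral {p<..<1} (\<lambda>t. - q (1 - t))
      = enn2ereal (\<integral>\<^sup>+t\<in>{0<..<1 - p}. ennreal (neg_part (q t)) \<partial>lborel)
        - enn2ereal (\<integral>\<^sup>+t\<in>{0<..<1 - p}. ennreal (pos_part (q t)) \<partial>lborel)"
    unfolding ext_set_integral_def
    using set_nn_integral_reflect[of "\<lambda>t. ennreal (pos_part (q t))" p 1]
      set_nn_integral_reflect[of "\<lambda>t. ennreal (neg_part (q t))" p 1]
    by simp
  then show ?thesis
    using finite unfolding ext_set_integral_def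
    by (cases "\<integral>\<^sup>+t\<in>{0<..<1 - p}. ennreal (pos_part (q t)) \<partial>lborel" rule: ennreal_cases;
        cases "\<integral>\<^sup>+t\<in>{0<..<1 - p}. ennreal (neg_part (q t)) \<partial>lborel" rule: ennreal_cases)
       simp_all
qed

lemma stop_loss_reflect:
  fixes q :: "real \<Rightarrow> real"
  assumes [measurable]: "q \<in> borel_measurable borel"
  shows "(\<integral>\<^sup>+t\<in>{0<..<1}. ennreal (pos_part (- q (1 - t) - w)) \<partial>lborel)
       = (\<integral>\<^sup>+t\<in>{0<..<1}. ennreal (neg_part (q t - (- w))) \<partial>lborel)"
proof -
  have "pos_part (- x - w) = neg_part (x - (- w))" for x :: real
    by (simp add: pos_part_def neg_part_def)
  then show ?thesis
    using set_nn_integral_reflect[of "\<lambda>t. ennreal (neg_part (q t - (- w)))" 0 1] by simp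
qed

lemma ball_unit_interval_reflect:
  "(\<forall>p\<in>{0<..<1::real}. P (1 - p)) \<longleftrightarrow> (\<forall>p\<in>{0<..<1}. P p)"
proof
  assume H: "\<forall>p\<in>{0<..<1}. P (1 - p)"
  have "P (1 - (1 - p))" if "p \<in> {0<..<1}" for p
    using bspec[OF H, of "1 - p"] that by simp
  then show "\<forall>p\<in>{0<..<1}. P p"
    by simp
qed simp

lemma all_uminus_reindex: "(\<forall>w::real. P (- w)) \<longleftrightarrow> (\<forall>w. P w)"
proof
  assume "\<forall>w. P (- w)"
  then have "P (- (- w))" for w
    by blast
  then show "\<forall>w. P w"
    by simp
qed simp

lemma mono_on_reflect:
  fixes q :: "real \<Rightarrow> real"
  assumes "mono_on {0<..<1} q"
  shows "mono_on {0<..<1} (\<lambda>t. - q (1 - t))"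
  by (rule mono_onI) (auto intro!: mono_onD[OF assms])

lemma reflected_upper_tail_le_iff:
  fixes q r :: "real \<Rightarrow> real"
  assumes "q \<in> borel_measurable borel" "mono_on {0<..<1} q"
    and "r \<in> borel_measurable borel" "mono_on {0<..<1} r"
    and p: "0 < p" "p < 1"
  shows "ext_set_integral {p<..<1} (\<lambda>t. - q (1 - t)) \<le> ext_set_integral {p<..<1} (\<lambda>t. - r (1 - t))
     \<longleftrightarrow> ext_set_integral {0<..<1 - p} r \<le> ext_set_integral {0<..<1 - p} q"
proof -
  have p': "0 < 1 - p" "1 - p < 1"
    using p by auto
  show ?thesis
    using ext_set_integral_reflect[OF assms(1) head_pos_part_finite[OF assms(2) p']]
      ext_set_integral_reflect[OF assms(3) head_pos_part_finite[OF assms(4) p']]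
    by simp
qed

lemma lower_tails_le_iff_stop_loss_le:
  fixes q r :: "real \<Rightarrow> real"
  assumes q: "q \<in> borel_measurable borel" "mono_on {0<..<1} q"
    and r: "r \<in> borel_measurable borel" "mono_on {0<..<1} r"
  shows "(\<forall>p\<in>{0<..<1}. ext_set_integral {0<..<p} r \<le> ext_set_integral {0<..<p} q) \<longleftrightarrow>
    (\<forall>w. (\<integral>\<^sup>+t\<in>{0<..<1}. ennreal (neg_part (q t - w)) \<partial>lborel)
           \<le> (\<integral>\<^sup>+t\<in>{0<..<1}. ennreal (neg_part (r t - w)) \<partial>lborel))"
proof -
  have reflected: "(\<lambda>t. - g (1 - t)) \<in> borel_measurable borel" "mono_on {0<..<1} (\<lambda>t. - g (1 - t))"
    if "g \<in> borel_measurable borel" "mono_on {0<..<1} g" for g :: "real \<Rightarrow> real"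
  proof -
    show "(\<lambda>t. - g (1 - t)) \<in> borel_measurable borel"
      using that(1) by measurable
    show "mono_on {0<..<1} (\<lambda>t. - g (1 - t))"
      by (rule mono_on_reflect[OF that(2)])
  qed
  have "(\<forall>p\<in>{0<..<1}. ext_set_integral {0<..<p} r \<le> ext_set_integral {0<..<p} q) \<longleftrightarrow>
      (\<forall>p\<in>{0<..<1}. ext_set_integral {0<..<1 - p} r \<le> ext_set_integral {0<..<1 - p} q)"
    by (rule ball_unit_interval_reflect[symmetric])
  also have "\<dots> \<longleftrightarrow> (\<forall>p\<in>{0<..<1}. ext_set_integral {p<..<1} (\<lambda>t. - q (1 - t))
                                  \<le> ext_set_integral {p<..<1} (\<lambda>t. - r (1 - t)))"
    by (rule ball_cong[OF refl]) (simp add: reflected_upper_tail_le_iff[OF q r])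
  also have "\<dots> \<longleftrightarrow> (\<forall>w. (\<integral>\<^sup>+t\<in>{0<..<1}. ennreal (pos_part (- q (1 - t) - w)) \<partial>lborel)
                        \<le> (\<integral>\<^sup>+t\<in>{0<..<1}. ennreal (pos_part (- r (1 - t) - w)) \<partial>lborel))"
    by (rule upper_tails_le_iff_stop_loss_le[OF reflected[OF q] reflected[OF r]])
  also have "\<dots> \<longleftrightarrow> (\<forall>w. (\<integral>\<^sup>+t\<in>{0<..<1}. ennreal (neg_part (q t - (- w))) \<partial>lborel)
                        \<le> (\<integral>\<^sup>+t\<in>{0<..<1}. ennreal (neg_part (r t - (- w))) \<partial>lborel))"
    unfolding stop_loss_reflect[OF q(1)] stop_loss_reflect[OF r(1)] ..
  also have "\<dots> \<longleftrightarrow> (\<forall>w. (\<integral>\<^sup>+t\<in>{0<..<1}. ennreal (neg_part (q t - w)) \<partial>lborel)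
                        \<le> (\<integral>\<^sup>+t\<in>{0<..<1}. ennreal (neg_part (r t - w)) \<partial>lborel))"
    by (rule all_uminus_reindex)
  finally show ?thesis .
qed

section \<open>Quantile representation\<close>

lemma left_quantile_eq_cdf_inverse:
  assumes "prob_space M" "X \<in> borel_measurable M"
  shows "cdf_distribution (distr M borel X)"
    and "left_quantile M X = (\<lambda>t. Inf {x. t \<le> cdf (distr M borel X) x})"
proof -
  show "cdf_distribution (distr M borel X)"
    unfolding cdf_distribution_def using assms by (simp add: prob_space.real_distribution_distr)
  have "cdf (distr M borel X) x = measure M {\<omega> \<in> space M. X \<omega> \<le> x}" for x
    unfolding cdf_def using assms(2) by (simp add: measure_distr vimage_def Int_def conj_commute)
  then show "left_quantile M X = (\<lambda>t. Inf {x. t \<le> cdf (distr M borel X) x})"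
    by (simp add: fun_eq_iff left_quantile_def)
qed

lemma left_quantile_mono:
  assumes "prob_space M" "X \<in> borel_measurable M"
  shows "mono_on {0<..<1} (left_quantile M X)"
proof -
  interpret cdf_distribution "distr M borel X"
    by (rule left_quantile_eq_cdf_inverse(1)[OF assms])
  show ?thesis
    unfolding left_quantile_eq_cdf_inverse(2)[OF assms] by (rule mono_I)
qed

lemma left_quantile_measurable:
  assumes "prob_space M" "X \<in> borel_measurable M"
  shows "left_quantile M X \<in> borel_measurable borel"
proof -
  let ?C = "cdf (distr M borel X)"
  interpret cdf_distribution "distr M borel X"
    by (rule left_quantile_eq_cdf_inverse(1)[OF assms])
  have "{x. t \<le> ?C x} = UNIV" if "t \<le> 0" for t
    using that cdf_nonneg order_trans by blast
  then have "mono_on {..0} (left_quantile M X)"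
    by (simp add: left_quantile_eq_cdf_inverse(2)[OF assms] mono_on_def)
  moreover have "{x. t \<le> ?C x} = {}" if "1 < t" for t
    using that cdf_bounded_prob by (auto simp: not_le intro: le_less_trans)
  then have "mono_on {1<..} (left_quantile M X)"
    by (simp add: left_quantile_eq_cdf_inverse(2)[OF assms] mono_on_def)
  moreover have "mono_on {0<..<1} (left_quantile M X)"
    unfolding left_quantile_eq_cdf_inverse(2)[OF assms] by (rule mono_I)
  moreover have "mono_on {1} (left_quantile M X)"
    by (simp add: mono_on_def)
  moreover have "\<Union>{{..0}, {0<..<1}, {1}, {1<..}} = (UNIV :: real set)"
    by auto
  ultimately show ?thesis
    by (intro borel_measurable_piecewise_mono[of "{{..0}, {0<..<1}, {1}, {1<..}}"]) auto
qed

lemma nn_integral_left_quantile: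
  fixes g :: "real \<Rightarrow> ennreal"
  assumes "prob_space M" "X \<in> borel_measurable M" and [measurable]: "g \<in> borel_measurable borel"
  shows "(\<integral>\<^sup>+\<omega>. g (X \<omega>) \<partial>M) = (\<integral>\<^sup>+t\<in>{0<..<1}. g (left_quantile M X t) \<partial>lborel)"
proof -
  let ?D = "distr M borel X"
  interpret cdf_distribution ?D
    by (rule left_quantile_eq_cdf_inverse(1)[OF assms(1,2)])
  have "(\<integral>\<^sup>+\<omega>. g (X \<omega>) \<partial>M) = (\<integral>\<^sup>+x. g x \<partial>?D)"
    using assms(2) by (simp add: nn_integral_distr)
  also have "\<dots> = (\<integral>\<^sup>+x. g x \<partial>distr (restrict_space lborel {0<..<1}) borel I)"
    by (simp add: distr_I_eq_M)
  also have "\<dots> = (\<integral>\<^sup>+t\<in>{0<..<1}. g (I t) \<partial>lborel)"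
    by (simp add: nn_integral_distr nn_integral_restrict_space)
  finally show ?thesis
    by (simp add: left_quantile_eq_cdf_inverse(2)[OF assms(1,2)])
qed

lemma ext_expectation_stop_loss_left_quantile:
  assumes "prob_space M" "X \<in> borel_measurable M"
  shows "ext_expectation M (\<lambda>\<omega>. neg_part (X \<omega> - w))
       = enn2ereal (\<integral>\<^sup>+t\<in>{0<..<1}. ennreal (neg_part (left_quantile M X t - w)) \<partial>lborel)"
    and "ext_expectation M (\<lambda>\<omega>. pos_part (X \<omega> - w))
       = enn2ereal (\<integral>\<^sup>+t\<in>{0<..<1}. ennreal (pos_part (left_quantile M X t - w)) \<partial>lborel)"
proof -
  have "(\<lambda>x. ennreal (neg_part (x - w))) \<in> borel_measurable borel"
    "(\<lambda>x. ennreal (pos_part (x - w))) \<in> borel_measurable borel"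
    by measurable
  from this[THEN nn_integral_left_quantile[OF assms]]
  show "ext_expectation M (\<lambda>\<omega>. neg_part (X \<omega> - w))
       = enn2ereal (\<integral>\<^sup>+t\<in>{0<..<1}. ennreal (neg_part (left_quantile M X t - w)) \<partial>lborel)"
    and "ext_expectation M (\<lambda>\<omega>. pos_part (X \<omega> - w))
       = enn2ereal (\<integral>\<^sup>+t\<in>{0<..<1}. ennreal (pos_part (left_quantile M X t - w)) \<partial>lborel)"
    by (simp_all add: ext_expectation_nonneg)
qed

lemma tails_iff_stop_loss:
  fixes X Y :: "'a \<Rightarrow> real"
  assumes "prob_space M" "X \<in> borel_measurable M" "Y \<in> borel_measurable M"
  shows "(\<forall>p\<in>{0<..<1::real}.
            ext_set_integral {0<..<p} (left_quantile M X) \<ge> ext_set_integral {0<..<p} (left_quantile M Y) \<and>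
            ext_set_integral {p<..<1} (left_quantile M X) \<le> ext_set_integral {p<..<1} (left_quantile M Y))
     \<longleftrightarrow> (\<forall>w::real.
            ext_expectation M (\<lambda>\<omega>. neg_part (X \<omega> - w)) \<le> ext_expectation M (\<lambda>\<omega>. neg_part (Y \<omega> - w)) \<and>
            ext_expectation M (\<lambda>\<omega>. pos_part (X \<omega> - w)) \<le> ext_expectation M (\<lambda>\<omega>. pos_part (Y \<omega> - w)))"
proof -
  let ?q = "left_quantile M X" and ?r = "left_quantile M Y"
  have q: "?q \<in> borel_measurable borel" "mono_on {0<..<1} ?q"
    using assms(1,2) by (rule left_quantile_measurable, rule left_quantile_mono)
  have r: "?r \<in> borel_measurable borel" "mono_on {0<..<1} ?r"
    using assms(1,3) by (rule left_quantile_measurable, rule left_quantile_mono)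
  show ?thesis
    unfolding ext_expectation_stop_loss_left_quantile[OF assms(1,2)]
      ext_expectation_stop_loss_left_quantile[OF assms(1,3)]
      less_eq_ennreal.rep_eq[symmetric]
    using lower_tails_le_iff_stop_loss_le[OF q r] upper_tails_le_iff_stop_loss_le[OF q r]
    by blast
qed

theorem theorem1:
  fixes M :: "'a measure" and X Y :: "'a \<Rightarrow> real"
  assumes "prob_space M"
    and "atomless M"
    and "X \<in> borel_measurable M"
    and "Y \<in> borel_measurable M"
  shows "(cx_le M X Y \<longleftrightarrow>
           (\<forall>p\<in>{0<..<1::real}.
              ext_set_integral {0<..<p} (left_quantile M X) \<ge> ext_set_integral {0<..<p} (left_quantile M Y) \<and>
              ext_set_integral {p<..<1} (left_quantile M X) \<le> ext_set_integral {p<..<1} (left_quantile M Y)))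
       \<and> (cx_le M X Y \<longleftrightarrow>
           (\<forall>w::real.
              ext_expectation M (\<lambda>\<omega>. neg_part (X \<omega> - w)) \<le> ext_expectation M (\<lambda>\<omega>. neg_part (Y \<omega> - w)) \<and>
              ext_expectation M (\<lambda>\<omega>. pos_part (X \<omega> - w)) \<le> ext_expectation M (\<lambda>\<omega>. pos_part (Y \<omega> - w))))"
  using cx_le_iff_stop_loss[OF assms(1,3,4)] tails_iff_stop_loss[OF assms(1,3,4)] by simp

end
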